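(* For every $X\in L^\infty$ and every sub-$\sigma$-field $\mathcal{G}\subseteq\mathcal{F}$, the conditional expectation $\mathbb{E}[X\mid\mathcal{G}]$ is non-empty.
   Context: $\mathbb{K}$ is a local field with non-archimedean absolute value $|\cdot|$ satisfying $|x|=0 \iff x=0$, $|xy|=|x||y|$, $|x+y|\le|x|\vee|y|$. $(\Omega,\mathcal{F},\mathbb{P})$ is a probability space; all equalities/inequalities between random variables are a.s. $L^\infty$ is the space of $\mathbb{K}$-valued random variables $X$ with $\|X\|_\infty:=\operatorname{ess\,sup}|X|<\infty$; $L^\infty(\mathcal{G})$ is its subspace of $\mathcal{G}$-measurable elements. For a non-negative real random variable $S$, $\operatorname{ess\,sup}\{S\mid\mathcal{G}\}:=\sup_{p\ge1}\mathbb{E}[S^p\mid\mathcal{G}]^{1/p}$ (usual real conditional expectation), and $\|X\|_\mathcal{G}:=\operatorname{ess\,sup}\{|X|\mid\mathcal{G}\}$. The conditional expectation is the set $\mathbb{E}[X\mid\mathcal{G}]:=\{Y\in L^\infty(\mathcal{G}): \|X-Y\|_\mathcal{G}\le\|X-Z\|_\mathcal{G}\ \text{a.s. for all } Z\in L^\infty(\mathcal{G})\}$. *)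

theory Defs
  imports "HOL-Probability.Probability"
begin

definition nonarch_abs :: "('k::field \<Rightarrow> real) \<Rightarrow> bool" where
  "nonarch_abs a \<longleftrightarrow> (\<forall>x. 0 \<le> a x) \<and> (\<forall>x. a x = 0 \<longleftrightarrow> x = 0)
     \<and> (\<forall>x y. a (x * y) = a x * a y) \<and> (\<forall>x y. a (x + y) \<le> max (a x) (a y))"

definition kball_seq_compact :: "('k::field \<Rightarrow> real) \<Rightarrow> real \<Rightarrow> bool" where
  "kball_seq_compact a r \<longleftrightarrow>
     (\<forall>s::nat \<Rightarrow> 'k. (\<forall>n. a (s n) \<le> r) \<longrightarrow>
        (\<exists>h l. strict_mono h \<and> a l \<le> r \<and> (\<lambda>n. a (s (h n) - l)) \<longlonglongrightarrow> 0))"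

text \<open>Local field with non-archimedean absolute value: non-discrete (nontrivial absolute
  value) and locally compact for the metric induced by the absolute value.\<close>
definition local_field :: "('k::field \<Rightarrow> real) \<Rightarrow> bool" where
  "local_field a \<longleftrightarrow> nonarch_abs a \<and> (\<exists>x. a x \<noteq> 0 \<and> a x \<noteq> 1)
     \<and> (\<exists>r>0. kball_seq_compact a r)"

definition kopen :: "('k::field \<Rightarrow> real) \<Rightarrow> 'k set \<Rightarrow> bool" where
  "kopen a U \<longleftrightarrow> (\<forall>x\<in>U. \<exists>r>0. \<forall>y. a (y - x) < r \<longrightarrow> y \<in> U)"

definition kborel :: "('k::field \<Rightarrow> real) \<Rightarrow> 'k measure" where
  "kborel a = sigma UNIV {U. kopen a U}"

definition Linf :: "'w measure \<Rightarrow> ('k::field \<Rightarrow> real) \<Rightarrow> ('w \<Rightarrow> 'k) \<Rightarrow> bool" where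
  "Linf M a X \<longleftrightarrow> X \<in> measurable M (kborel a) \<and> (\<exists>C. AE w in M. a (X w) \<le> C)"

definition LinfG :: "'w measure \<Rightarrow> 'w measure \<Rightarrow> ('k::field \<Rightarrow> real) \<Rightarrow> ('w \<Rightarrow> 'k) \<Rightarrow> bool" where
  "LinfG M G a Y \<longleftrightarrow> Y \<in> measurable G (kborel a) \<and> (\<exists>C. AE w in M. a (Y w) \<le> C)"

definition cond_esssup :: "'w measure \<Rightarrow> 'w measure \<Rightarrow> ('w \<Rightarrow> real) \<Rightarrow> 'w \<Rightarrow> ereal" where
  "cond_esssup M G S w =
     (SUP p\<in>{1::nat..}. ereal (real_cond_exp M G (\<lambda>v. S v ^ p) w powr (1 / real p)))"

definition cond_norm :: "'w measure \<Rightarrow> 'w measure \<Rightarrow> ('k::field \<Rightarrow> real) \<Rightarrow> ('w \<Rightarrow> 'k) \<Rightarrow> 'w \<Rightarrow> ereal" where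
  "cond_norm M G a X = cond_esssup M G (\<lambda>w. a (X w))"

definition cond_exp_K :: "'w measure \<Rightarrow> 'w measure \<Rightarrow> ('k::field \<Rightarrow> real) \<Rightarrow> ('w \<Rightarrow> 'k) \<Rightarrow> ('w \<Rightarrow> 'k) set" where
  "cond_exp_K M G a X = {Y. LinfG M G a Y \<and>
     (\<forall>Z. LinfG M G a Z \<longrightarrow>
        (AE w in M. cond_norm M G a (\<lambda>v. X v - Y v) w \<le> cond_norm M G a (\<lambda>v. X v - Z v) w))}"

end

theory Submission
  imports Defs
begin

(* Minimise Z \<mapsto> \<integral> ||X - Z||_G over the G-measurable Z bounded by a bound C of |X|; by the
   ultrametric inequality, truncating any competitor at C only decreases |X - Z|.  Gluing two
   candidates along the G-measurable set where one has the smaller conditional distance shows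
   that the conditional distances form a downward directed family, so a minimising sequence
   can be taken decreasing.  Bounded balls of K are compact and K is separable, so the sequence
   has a G-measurable selection of pointwise cluster points; its conditional distance lies
   below that of every term and therefore attains the essential infimum.  The properties of
   ess sup{. | G} used are monotonicity, that it fixes bounded G-measurable functions, and that
   it dominates its argument almost everywhere. *)

section \<open>Ultrametric absolute values\<close>

locale nonarch_abs_field =
  fixes a :: "'k::field \<Rightarrow> real"
  assumes nonarch_abs: "nonarch_abs a"
begin

lemma absv_nonneg [simp]: "0 \<le> a x"
  and absv_eq_0_iff [simp]: "a x = 0 \<longleftrightarrow> x = 0"
  and absv_mult: "a (x * y) = a x * a y"
  and absv_add_le_max: "a (x + y) \<le> max (a x) (a y)"
  using nonarch_abs unfolding nonarch_abs_def by auto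

lemma absv_zero [simp]: "a 0 = 0"
  by simp

lemma absv_one [simp]: "a 1 = 1"
  using absv_mult[of 1 1] absv_eq_0_iff[of 1] by simp

lemma absv_minus [simp]: "a (- x) = a x"
proof -
  have "(a (-1) - 1) * (a (-1) + 1) = 0"
    using absv_mult[of "-1" "-1"] by (simp add: algebra_simps)
  moreover have "a (-1) + 1 \<noteq> 0"
    using absv_nonneg[of "-1"] by linarith
  ultimately have "a (-1) = 1"
    by simp
  then show ?thesis
    using absv_mult[of "-1" x] by simp
qed

lemma absv_diff_commute: "a (x - y) = a (y - x)"
  by (metis absv_minus minus_diff_eq)

lemma absv_diff_triangle: "a (x - z) \<le> max (a (x - y)) (a (y - z))"
  using absv_add_le_max[of "x - y" "y - z"] by simp

lemma absv_diff_less_trans: "a (x - y) < r \<Longrightarrow> a (y - z) < r \<Longrightarrow> a (x - z) < r"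
  using absv_diff_triangle[of x z y] by simp

lemma absv_diff_le_trans: "a (x - y) \<le> r \<Longrightarrow> a (y - z) \<le> r \<Longrightarrow> a (x - z) \<le> r"
  using absv_diff_triangle[of x z y] by simp

lemma absv_diff_le_max: "a (x - y) \<le> max (a x) (a y)"
  using absv_add_le_max[of x "- y"] by simp

lemma absv_le_diff_if_less: "a x < a z \<Longrightarrow> a z \<le> a (x - z)"
  using absv_add_le_max[of x "z - x"] by (simp add: absv_diff_commute)

lemma absv_inverse: "a (inverse x) = inverse (a x)"
proof (cases "x = 0")
  case False
  then have "a x * a (inverse x) = 1"
    by (simp add: absv_mult[symmetric])
  then show ?thesis
    by (simp add: inverse_unique)
qed simp

lemma absv_divide: "a (x / y) = a x / a y"
  by (simp add: divide_inverse absv_mult absv_inverse)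

lemma absv_power: "a (x ^ n) = a x ^ n"
  by (induction n) (simp_all add: absv_mult)

lemma metric_space_absv: "Metric_space UNIV (\<lambda>x y. a (x - y))"
proof
  fix x y z :: 'k
  show "a (x - z) \<le> a (x - y) + a (y - z)"
    using absv_diff_triangle[of x z y] absv_nonneg[of "x - y"] absv_nonneg[of "y - z"] by linarith
qed (simp_all add: absv_diff_commute)

lemma absv_le_if_tendsto:
  assumes bound: "\<And>n. a (s n) \<le> R" and lim: "(\<lambda>n. a (s n - l)) \<longlonglongrightarrow> 0"
  shows "a l \<le> R"
proof (rule ccontr)
  assume "\<not> a l \<le> R"
  then have "0 < a l"
    using bound[of 0] absv_nonneg[of "s 0"] by linarith
  then have "eventually (\<lambda>n. a (s n - l) < a l) sequentially"
    using order_tendstoD(2)[OF lim] by blast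
  then obtain n where "a (s n - l) < a l"
    by (auto simp: eventually_sequentially)
  then have "a l \<le> a (s n)"
    using absv_diff_le_max[of "s n" "s n - l"] by simp
  with bound[of n] \<open>\<not> a l \<le> R\<close> show False
    by linarith
qed

end

section \<open>Local fields: compact balls, separability, Borel measurability\<close>

lemma pred_infinite_nat:
  assumes "\<And>n::nat. Measurable.pred N (P n)"
  shows "Measurable.pred N (\<lambda>w. infinite {n. P n w})"
  unfolding infinite_nat_iff_unbounded_le using assms by measurable

locale local_field_abs =
  fixes a :: "'k::field \<Rightarrow> real"
  assumes local_field: "local_field a"

sublocale local_field_abs \<subseteq> nonarch_abs_field
  using local_field unfolding local_field_def by unfold_locales blast

context local_field_abs
begin

lemma exists_absv_gt_0_lt_1: "\<exists>p. 0 < a p \<and> a p < 1"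
proof -
  obtain x where x: "a x \<noteq> 0" "a x \<noteq> 1"
    using local_field unfolding local_field_def by blast
  show ?thesis
  proof (cases "a x < 1")
    case True
    with x show ?thesis
      using absv_nonneg[of x] by (intro exI[of _ x]) linarith
  next
    case False
    with x show ?thesis
      by (intro exI[of _ "inverse x"]) (simp add: absv_inverse inverse_less_1_iff)
  qed
qed

lemma exists_absv_scaling:
  assumes "0 < r"
  shows "\<exists>c. c \<noteq> 0 \<and> a c * R \<le> r"
proof -
  obtain p where p: "0 < a p" "a p < 1"
    using exists_absv_gt_0_lt_1 by blast
  obtain m where m: "a p ^ m < r / (\<bar>R\<bar> + 1)"
    using real_arch_pow_inv[of "r / (\<bar>R\<bar> + 1)" "a p"] p assms by auto
  have "a (p ^ m) * R \<le> a p ^ m * (\<bar>R\<bar> + 1)"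
    by (simp add: absv_power mult_left_mono)
  also have "\<dots> < r"
    using m by (simp add: pos_less_divide_eq)
  finally show ?thesis
    using p(1) by (intro exI[of _ "p ^ m"]) auto
qed

lemma kball_seq_compact_any: "kball_seq_compact a R"
  unfolding kball_seq_compact_def
proof (intro allI impI)
  fix s :: "nat \<Rightarrow> 'k"
  assume s: "\<forall>n. a (s n) \<le> R"
  obtain r where r: "0 < r" "kball_seq_compact a r"
    using local_field unfolding local_field_def by blast
  obtain c where c: "c \<noteq> 0" "a c * R \<le> r"
    using exists_absv_scaling[OF r(1)] by blast
  have "\<forall>n. a (c * s n) \<le> r"
  proof
    fix n
    have "a c * a (s n) \<le> a c * R"
      using s by (simp add: mult_left_mono)
    then show "a (c * s n) \<le> r"
      using c(2) by (simp add: absv_mult)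
  qed
  then obtain h l where h: "strict_mono h" and lim: "(\<lambda>n. a (c * s (h n) - l)) \<longlonglongrightarrow> 0"
    using r(2)[unfolded kball_seq_compact_def, THEN spec[of _ "\<lambda>n. c * s n"]] by auto
  have "a (s (h n) - l / c) = a (c * s (h n) - l) / a c" for n
  proof -
    have "s (h n) - l / c = (c * s (h n) - l) / c"
      using c(1) by (simp add: field_simps)
    then show ?thesis
      by (simp add: absv_divide)
  qed
  then have lim': "(\<lambda>n. a (s (h n) - l / c)) \<longlonglongrightarrow> 0"
    using tendsto_divide_zero[OF lim] by simp
  moreover have "a (l / c) \<le> R"
    using absv_le_if_tendsto[OF _ lim'] s by blast
  ultimately show "\<exists>h l. strict_mono h \<and> a l \<le> R \<and> (\<lambda>n. a (s (h n) - l)) \<longlonglongrightarrow> 0"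
    using h by blast
qed

lemma finite_net:
  assumes "0 < e"
  shows "\<exists>L. finite L \<and> (\<forall>x. a x \<le> R \<longrightarrow> (\<exists>y\<in>L. a (x - y) < e))"
proof -
  interpret Ms: Metric_space UNIV "\<lambda>x y. a (x - y)"
    by (rule metric_space_absv)
  let ?B = "{x. a x \<le> R}"
  have "compactin Ms.mtopology ?B"
    unfolding Ms.compactin_sequentially
  proof (intro conjI allI impI)
    fix s :: "nat \<Rightarrow> 'k"
    assume "range s \<subseteq> ?B"
    then obtain h l where "strict_mono h" "a l \<le> R" "(\<lambda>n. a (s (h n) - l)) \<longlonglongrightarrow> 0"
      using kball_seq_compact_any unfolding kball_seq_compact_def by blast
    then show "\<exists>l h. l \<in> ?B \<and> strict_mono h \<and> limitin Ms.mtopology (s \<circ> h) l sequentially"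
      unfolding Ms.limitin_metric_dist_null by (auto simp: o_def)
  qed simp
  then have "Ms.mtotally_bounded ?B"
    by (rule Ms.compactin_imp_mtotally_bounded)
  then obtain L where L: "finite L" "?B \<subseteq> (\<Union>y\<in>L. Ms.mball y e)"
    using assms unfolding Ms.mtotally_bounded_def by blast
  show ?thesis
  proof (intro exI[of _ L] conjI allI impI)
    fix x
    assume "a x \<le> R"
    then obtain y where "y \<in> L" "a (y - x) < e"
      using L(2) unfolding Ms.mball_def by blast
    then show "\<exists>y\<in>L. a (x - y) < e"
      by (metis absv_diff_commute)
  qed (fact L(1))
qed

lemma exists_limit_with_rate:
  fixes c :: "nat \<Rightarrow> 'k"
  assumes bound: "\<And>n. a (c n) \<le> R" and cauchy: "\<And>k j. k \<le> j \<Longrightarrow> a (c j - c k) \<le> \<rho> k"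
  shows "\<exists>l. \<forall>k. a (c k - l) \<le> \<rho> k"
proof -
  obtain h l where h: "strict_mono h" and lim: "(\<lambda>n. a (c (h n) - l)) \<longlonglongrightarrow> 0"
    using kball_seq_compact_any bound unfolding kball_seq_compact_def by blast
  have "a (c k - l) \<le> \<rho> k" for k
  proof (rule ccontr)
    assume "\<not> a (c k - l) \<le> \<rho> k"
    moreover have "0 \<le> \<rho> k"
      using cauchy[of k k] by simp
    ultimately have "eventually (\<lambda>n. a (c (h n) - l) < a (c k - l)) sequentially"
      using order_tendstoD(2)[OF lim] by simp
    then obtain N where N: "\<And>n. N \<le> n \<Longrightarrow> a (c (h n) - l) < a (c k - l)"
      unfolding eventually_sequentially by blast
    define n where "n = max N k"
    have n: "k \<le> n" "a (c (h n) - l) < a (c k - l)"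
      using N[of n] unfolding n_def by auto
    have "a (c k - c (h n)) \<le> \<rho> k"
      using cauchy[of k "h n"] seq_suble[OF h, of n] n(1) by (simp add: absv_diff_commute)
    with n(2) \<open>\<not> a (c k - l) \<le> \<rho> k\<close> show False
      using absv_diff_triangle[of "c k" l "c (h n)"] by linarith
  qed
  then show ?thesis
    by blast
qed

lemma countable_dense_subset: "\<exists>D. countable D \<and> (\<forall>x e. 0 < e \<longrightarrow> (\<exists>d\<in>D. a (x - d) < e))"
proof -
  define L where "L R m = (SOME L. finite L \<and> (\<forall>x. a x \<le> real R \<longrightarrow> (\<exists>y\<in>L. a (x - y) < 1 / Suc m)))"
    for R m :: nat
  have L: "finite (L R m) \<and> (\<forall>x. a x \<le> real R \<longrightarrow> (\<exists>y\<in>L R m. a (x - y) < 1 / Suc m))" for R m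
    unfolding L_def by (rule someI_ex) (rule finite_net, simp)
  have "\<exists>d\<in>(\<Union>R m. L R m). a (x - d) < e" if "0 < e" for x e
  proof -
    obtain m where m: "1 / real (Suc m) < e"
      using \<open>0 < e\<close> by (metis nat_approx_posE of_nat_Suc)
    obtain R :: nat where "a x \<le> real R"
      using real_nat_ceiling_ge by blast
    then obtain y where "y \<in> L R m" "a (x - y) < 1 / Suc m"
      using L by blast
    with m show ?thesis
      by (intro bexI[of _ y]) auto
  qed
  moreover have "countable (\<Union>R m. L R m)"
    using L by (intro countable_UN countableI_type) (simp add: countable_finite)
  ultimately show ?thesis
    by blast
qed

lemma kopen_ball: "kopen a {y. a (y - c) < r}"
  unfolding kopen_def
proof
  fix x
  assume x: "x \<in> {y. a (y - c) < r}"
  then have "0 < r"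
    using absv_nonneg[of "x - c"] by (simp only: mem_Collect_eq)
  moreover have "\<forall>y. a (y - x) < r \<longrightarrow> y \<in> {y. a (y - c) < r}"
    using x absv_diff_less_trans by blast
  ultimately show "\<exists>s>0. \<forall>y. a (y - x) < s \<longrightarrow> y \<in> {y. a (y - c) < r}"
    by blast
qed

lemma sets_kborel: "sets (kborel a) = sigma_sets UNIV {U. kopen a U}"
  unfolding kborel_def by (rule sets_measure_of) auto

lemma space_kborel [simp]: "space (kborel a) = UNIV"
  unfolding kborel_def by (rule space_measure_of) auto

lemma kopen_eq_Union_balls:
  assumes U: "kopen a U" and D: "\<And>x e. 0 < e \<Longrightarrow> \<exists>d\<in>D. a (x - d) < e"
  shows "U = (\<Union>(d, m)\<in>{(d, m). d \<in> D \<and> {y. a (y - d) < 1 / Suc m} \<subseteq> U}. {y. a (y - d) < 1 / Suc m})"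
    (is "U = ?balls")
proof (intro equalityI subsetI)
  fix x
  assume "x \<in> U"
  then obtain r where r: "0 < r" "\<And>y. a (y - x) < r \<Longrightarrow> y \<in> U"
    using U unfolding kopen_def by blast
  obtain m where m: "1 / real (Suc m) < r"
    using r(1) by (metis nat_approx_posE of_nat_Suc)
  obtain d where d: "d \<in> D" "a (x - d) < 1 / Suc m"
    using D[of "1 / Suc m" x] by auto
  have "{y. a (y - d) < 1 / Suc m} \<subseteq> U"
  proof
    fix y
    assume "y \<in> {y. a (y - d) < 1 / Suc m}"
    then have "a (y - x) < 1 / Suc m"
      using d(2) absv_diff_less_trans[of y d "1 / Suc m" x] by (simp add: absv_diff_commute)
    with r m show "y \<in> U"
      by auto
  qed
  with d show "x \<in> ?balls"
    by blast
qed auto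

lemma measurable_kborelI:
  assumes "\<And>c r. {w \<in> space N. a (f w - c) < r} \<in> sets N"
  shows "f \<in> measurable N (kborel a)"
  unfolding kborel_def
proof (rule measurable_measure_of)
  obtain D where D: "countable D" "\<And>x e. 0 < e \<Longrightarrow> \<exists>d\<in>D. a (x - d) < e"
    using countable_dense_subset by blast
  fix U
  assume "U \<in> {U. kopen a U}"
  then have U: "kopen a U"
    by simp
  let ?I = "{(d, m). d \<in> D \<and> {y. a (y - d) < 1 / Suc m} \<subseteq> U}"
  have "countable ?I"
    by (rule countable_subset[of _ "D \<times> UNIV"]) (auto intro: D(1))
  have "f -` U \<inter> space N = (\<Union>(d, m)\<in>?I. {w \<in> space N. a (f w - d) < 1 / Suc m})"
    by (subst kopen_eq_Union_balls[OF U D(2)]) auto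
  also have "\<dots> \<in> sets N"
    using \<open>countable ?I\<close> assms by (intro sets.countable_UN') auto
  finally show "f -` U \<inter> space N \<in> sets N" .
qed auto

lemma pred_absv_diff_less:
  assumes "f \<in> measurable N (kborel a)"
  shows "Measurable.pred N (\<lambda>w. a (f w - c) < r)"
proof -
  have "{y. a (y - c) < r} \<in> sets (kborel a)"
    unfolding sets_kborel using kopen_ball by auto
  from measurable_sets[OF assms this] show ?thesis
    unfolding pred_def by (simp add: vimage_def Int_def conj_commute)
qed

lemma borel_measurable_absv_diff:
  assumes f: "f \<in> measurable N (kborel a)" and g: "g \<in> measurable N (kborel a)"
  shows "(\<lambda>w. a (f w - g w)) \<in> borel_measurable N"
  unfolding borel_measurable_iff_less
proof
  fix t :: real
  obtain D where D: "countable D" "\<And>x e. 0 < e \<Longrightarrow> \<exists>d\<in>D. a (x - d) < e"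
    using countable_dense_subset by blast
  show "{w \<in> space N. a (f w - g w) < t} \<in> sets N"
  proof (cases "0 < t")
    case True
    have "{w \<in> space N. a (f w - g w) < t} =
      (\<Union>d\<in>D. {w \<in> space N. a (f w - d) < t \<and> a (g w - d) < t})"
    proof (intro equalityI subsetI)
      fix w
      assume w: "w \<in> {w \<in> space N. a (f w - g w) < t}"
      obtain d where "d \<in> D" "a (f w - d) < t"
        using D(2)[OF True] by blast
      moreover have "a (g w - d) < t"
        using absv_diff_less_trans[of "g w" "f w" t d] w calculation by (simp add: absv_diff_commute)
      ultimately show "w \<in> (\<Union>d\<in>D. {w \<in> space N. a (f w - d) < t \<and> a (g w - d) < t})"
        using w by blast
    next
      fix w
      assume "w \<in> (\<Union>d\<in>D. {w \<in> space N. a (f w - d) < t \<and> a (g w - d) < t})"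
      then show "w \<in> {w \<in> space N. a (f w - g w) < t}"
        using absv_diff_less_trans[of "f w" _ t "g w"] by (auto simp: absv_diff_commute)
    qed
    also have "\<dots> \<in> sets N"
      using D(1) pred_absv_diff_less[OF f] pred_absv_diff_less[OF g]
      by (intro sets.countable_UN') (auto simp: pred_def)
    finally show ?thesis .
  next
    case False
    then have "{w \<in> space N. a (f w - g w) < t} = {}"
      by (auto simp: not_less intro!: order_trans[OF _ absv_nonneg])
    then show ?thesis
      by (simp only: sets.empty_sets)
  qed
qed

lemma borel_measurable_absv:
  "f \<in> measurable N (kborel a) \<Longrightarrow> (\<lambda>w. a (f w)) \<in> borel_measurable N"
  using borel_measurable_absv_diff[OF _ measurable_const[of 0]] by simp

subsection \<open>Measurable selection of cluster points\<close>

lemma exists_finite_net_lists: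
  "\<exists>NL. \<forall>k. \<forall>x. a x \<le> C \<longrightarrow> (\<exists>i<length (NL k). a (x - NL k ! i) < 1 / Suc k)"
proof -
  have "\<exists>xs. \<forall>x. a x \<le> C \<longrightarrow> (\<exists>i<length xs. a (x - xs ! i) < 1 / Suc k)" for k
  proof -
    obtain L where L: "finite L" "\<forall>x. a x \<le> C \<longrightarrow> (\<exists>y\<in>L. a (x - y) < 1 / Suc k)"
      using finite_net[of "1 / Suc k" C] by auto
    obtain xs where "set xs = L"
      using finite_list[OF L(1)] by blast
    with L(2) show ?thesis
      by (metis in_set_conv_nth)
  qed
  then show ?thesis
    by (rule choice[OF allI])
qed

(* NL k is meant to be a finite 1/(k+1)-net of the C-ball.  The level-k center is the first net
   point whose ball contains W n w for infinitely many n and which lies within the previous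
   radius of the previous center; taking the first such index (LEAST) keeps the centers
   measurable in w. *)
primrec cluster_center :: "(nat \<Rightarrow> 'k list) \<Rightarrow> (nat \<Rightarrow> 'b \<Rightarrow> 'k) \<Rightarrow> nat \<Rightarrow> 'b \<Rightarrow> 'k" where
  "cluster_center NL W 0 w =
     NL 0 ! (LEAST i. i < length (NL 0) \<and> infinite {n. a (W n w - NL 0 ! i) < 1})"
| "cluster_center NL W (Suc k) w =
     NL (Suc k) ! (LEAST i. i < length (NL (Suc k)) \<and>
       a (NL (Suc k) ! i - cluster_center NL W k w) < 1 / Suc k \<and>
       infinite {n. a (W n w - NL (Suc k) ! i) < 1 / Suc (Suc k)})"

lemma measurable_cluster_center:
  assumes W: "\<And>n. W n \<in> measurable N (kborel a)"
  shows "cluster_center NL W k \<in> measurable N (kborel a)"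
proof (induction k)
  case 0
  have "(\<lambda>w. LEAST i. i < length (NL 0) \<and> infinite {n. a (W n w - NL 0 ! i) < 1})
      \<in> measurable N (count_space UNIV)"
    by (intro measurable_Least pred_intros_logic pred_infinite_nat pred_absv_diff_less W) simp
  from measurable_compose[OF this, of "\<lambda>i. NL 0 ! i"] show ?case
    by simp
next
  case (Suc k)
  have "Measurable.pred N (\<lambda>w. a (NL (Suc k) ! i - cluster_center NL W k w) < 1 / Suc k)" for i
    using pred_absv_diff_less[OF Suc.IH] by (simp add: absv_diff_commute)
  then have "(\<lambda>w. LEAST i. i < length (NL (Suc k)) \<and>
       a (NL (Suc k) ! i - cluster_center NL W k w) < 1 / Suc k \<and>
       infinite {n. a (W n w - NL (Suc k) ! i) < 1 / Suc (Suc k)}) \<in> measurable N (count_space UNIV)"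
    by (intro measurable_Least pred_intros_logic pred_infinite_nat pred_absv_diff_less W) simp_all
  from measurable_compose[OF this, of "\<lambda>i. NL (Suc k) ! i"] show ?case
    by simp
qed

lemma cluster_center_props:
  fixes W :: "nat \<Rightarrow> 'b \<Rightarrow> 'k"
  assumes net: "\<And>k x. a x \<le> C \<Longrightarrow> \<exists>i<length (NL k). a (x - NL k ! i) < 1 / Suc k"
    and bound: "\<And>n. a (W n w) \<le> C"
  shows "infinite {n. a (W n w - cluster_center NL W k w) < 1 / Suc k}"
    and "a (cluster_center NL W (Suc k) w - cluster_center NL W k w) < 1 / Suc k"
proof -
  let ?c = "\<lambda>k. cluster_center NL W k w"
  have net_index: "\<exists>i\<in>{..<length (NL k)}. a (W n w - NL k ! i) < 1 / Suc k" for k n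
    using net[OF bound] by blast
  have step: "infinite {n. a (W n w - ?c (Suc k)) < 1 / Suc (Suc k)} \<and> a (?c (Suc k) - ?c k) < 1 / Suc k"
    if infinite_k: "infinite {n. a (W n w - ?c k) < 1 / Suc k}" for k
  proof -
    let ?S = "{n. a (W n w - ?c k) < 1 / Suc k}"
    have "\<exists>i\<in>{..<length (NL (Suc k))}. infinite {n \<in> ?S. a (W n w - NL (Suc k) ! i) < 1 / Suc (Suc k)}"
      using net_index by (intro pigeonhole_infinite_rel[OF infinite_k finite_lessThan]) blast
    then obtain i where i: "i < length (NL (Suc k))"
      "infinite {n \<in> ?S. a (W n w - NL (Suc k) ! i) < 1 / Suc (Suc k)}"
      by blast
    then obtain n where n: "a (W n w - ?c k) < 1 / Suc k" "a (W n w - NL (Suc k) ! i) < 1 / Suc (Suc k)"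
      using not_finite_existsD by blast
    have "1 / real (Suc (Suc k)) \<le> 1 / Suc k"
      by (simp add: frac_le)
    with n have "a (NL (Suc k) ! i - ?c k) < 1 / Suc k"
      using absv_diff_less_trans[of "NL (Suc k) ! i" "W n w" "1 / Suc k" "?c k"] by (simp add: absv_diff_commute)
    moreover have "infinite {n. a (W n w - NL (Suc k) ! i) < 1 / Suc (Suc k)}"
      using i(2) by (rule contrapos_nn) (auto elim: finite_subset)
    ultimately have "\<exists>i. i < length (NL (Suc k)) \<and> a (NL (Suc k) ! i - ?c k) < 1 / Suc k \<and>
        infinite {n. a (W n w - NL (Suc k) ! i) < 1 / Suc (Suc k)}"
      using i(1) by blast
    from LeastI_ex[OF this] show ?thesis
      by simp
  qed
  have base: "infinite {n. a (W n w - ?c 0) < 1}"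
  proof -
    have "\<exists>i\<in>{..<length (NL 0)}. infinite {n \<in> UNIV. a (W n w - NL 0 ! i) < 1}"
      using net_index[of 0] by (intro pigeonhole_infinite_rel[OF infinite_UNIV_nat finite_lessThan]) simp
    then have "\<exists>i. i < length (NL 0) \<and> infinite {n. a (W n w - NL 0 ! i) < 1}"
      by auto
    from LeastI_ex[OF this] show ?thesis
      by simp
  qed
  have infinite_ball: "infinite {n. a (W n w - ?c k) < 1 / Suc k}" for k
  proof (induction k)
    case (Suc k)
    then show ?case
      using step by blast
  qed (use base in simp)
  then show "infinite {n. a (W n w - ?c k) < 1 / Suc k}"
    by blast
  show "a (?c (Suc k) - ?c k) < 1 / Suc k"
    using step[OF infinite_ball] by blast
qed

lemma measurable_limit_with_rate:
  assumes f: "\<And>k. f k \<in> measurable N (kborel a)" and rate: "\<And>k w. a (f k w - g w) \<le> 1 / Suc k"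
  shows "g \<in> measurable N (kborel a)"
proof (rule measurable_kborelI)
  fix c r
  have "{w \<in> space N. a (g w - c) < r} = (\<Union>k\<in>{k. 1 / Suc k < r}. {w \<in> space N. a (f k w - c) < r})"
  proof (intro equalityI subsetI)
    fix w
    assume w: "w \<in> {w \<in> space N. a (g w - c) < r}"
    then have "0 < r"
      using absv_nonneg[of "g w - c"] by (simp only: mem_Collect_eq) linarith
    then obtain k where k: "1 / real (Suc k) < r"
      by (metis nat_approx_posE of_nat_Suc)
    then have "a (f k w - c) < r"
      using absv_diff_triangle[of "f k w" c "g w"] rate[of k w] w by auto
    with k w show "w \<in> (\<Union>k\<in>{k. 1 / Suc k < r}. {w \<in> space N. a (f k w - c) < r})"
      by blast
  next
    fix w
    assume "w \<in> (\<Union>k\<in>{k. 1 / Suc k < r}. {w \<in> space N. a (f k w - c) < r})"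
    then obtain k where k: "1 / real (Suc k) < r" "w \<in> space N" "a (f k w - c) < r"
      by blast
    then have "a (g w - c) < r"
      using absv_diff_triangle[of "g w" c "f k w"] rate[of k w] absv_diff_commute[of "g w" "f k w"] by auto
    with k show "w \<in> {w \<in> space N. a (g w - c) < r}"
      by blast
  qed
  also have "\<dots> \<in> sets N"
    using pred_absv_diff_less[OF f] by (intro sets.countable_UN') (auto simp: pred_def)
  finally show "{w \<in> space N. a (g w - c) < r} \<in> sets N" .
qed

lemma cluster_center_converges:
  fixes W :: "nat \<Rightarrow> 'b \<Rightarrow> 'k"
  assumes net: "\<And>k x. a x \<le> C \<Longrightarrow> \<exists>i<length (NL k). a (x - NL k ! i) < 1 / Suc k"
    and bound: "\<And>n. a (W n w) \<le> C"
  shows "\<exists>l. \<forall>k. a (cluster_center NL W k w - l) \<le> 1 / Suc k"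
proof (rule exists_limit_with_rate)
  let ?c = "\<lambda>k. cluster_center NL W k w"
  note center = cluster_center_props[of C NL W w, OF net bound]
  show "a (?c j - ?c k) \<le> 1 / Suc k" if "k \<le> j" for j k
    using that
  proof (induction j rule: dec_induct)
    case (step j)
    have "1 / real (Suc j) \<le> 1 / Suc k"
      using step(1) by (simp add: frac_le)
    with center(2)[of j] have "a (?c (Suc j) - ?c j) \<le> 1 / Suc k"
      by linarith
    then show ?case
      using absv_diff_le_trans[OF _ step.IH] by blast
  qed simp
  show "a (?c k) \<le> max C 1" for k
  proof -
    obtain n where "a (W n w - ?c k) < 1 / Suc k"
      using center(1)[of k] not_finite_existsD by blast
    moreover have "1 / real (Suc k) \<le> 1"
      by simp
    ultimately have "a (W n w - ?c k) \<le> 1"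
      by linarith
    then show ?thesis
      using absv_diff_le_max[of "W n w" "W n w - ?c k"] bound[of n] by simp
  qed
qed

lemma exists_measurable_cluster_point:
  fixes W :: "nat \<Rightarrow> 'b \<Rightarrow> 'k"
  assumes W: "\<And>n. W n \<in> measurable N (kborel a)" and bound: "\<And>n w. a (W n w) \<le> C"
  shows "\<exists>Y. Y \<in> measurable N (kborel a) \<and> (\<forall>w. a (Y w) \<le> C) \<and>
    (\<forall>w e j. 0 < e \<longrightarrow> (\<exists>n\<ge>j. a (W n w - Y w) < e))"
proof -
  obtain NL where net: "\<And>k x. a x \<le> C \<Longrightarrow> \<exists>i<length (NL k). a (x - NL k ! i) < 1 / Suc k"
    using exists_finite_net_lists by blast
  define c where "c k w = cluster_center NL W k w" for k w
  define Y where "Y w = (SOME l. \<forall>k. a (c k w - l) \<le> 1 / Suc k)" for w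
  have Y: "a (c k w - Y w) \<le> 1 / Suc k" for k w
    using someI_ex[OF cluster_center_converges[of C NL W w, OF net bound, folded c_def]] unfolding Y_def by blast
  have cluster: "\<exists>n\<ge>j. a (W n w - Y w) < e" if "0 < e" for w e j
  proof -
    obtain k where k: "1 / real (Suc k) < e"
      using \<open>0 < e\<close> by (metis nat_approx_posE of_nat_Suc)
    obtain n where n: "j \<le> n" "a (W n w - c k w) < 1 / Suc k"
      using cluster_center_props(1)[of C NL W w k, OF net bound] unfolding c_def infinite_nat_iff_unbounded_le
      by blast
    have "a (W n w - Y w) \<le> 1 / Suc k"
      using absv_diff_le_trans[of "W n w" "c k w" "1 / Suc k" "Y w"] n(2) Y[of k w] by simp
    with n(1) k show ?thesis
      by (intro exI[of _ n]) auto
  qed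
  have "a (Y w) \<le> C" for w
  proof (rule ccontr)
    assume "\<not> a (Y w) \<le> C"
    then have "0 < a (Y w)"
      using bound[of 0 w] absv_nonneg[of "W 0 w"] by linarith
    then obtain n where "a (W n w - Y w) < a (Y w)"
      using cluster by blast
    with \<open>\<not> a (Y w) \<le> C\<close> show False
      using absv_le_diff_if_less[of "W n w" "Y w"] bound[of n w] by linarith
  qed
  moreover have "Y \<in> measurable N (kborel a)"
    using measurable_limit_with_rate[OF measurable_cluster_center[OF W] Y[unfolded c_def]] .
  ultimately show ?thesis
    using cluster by blast
qed

end

section \<open>The conditional essential supremum\<close>

lemma cond_esssup_nonneg: "0 \<le> cond_esssup M G S w"
  unfolding cond_esssup_def by (rule order_trans[OF _ SUP_upper[of 1]]) auto

lemma borel_measurable_cond_esssup [measurable]: "cond_esssup M G S \<in> borel_measurable G"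
  unfolding cond_esssup_def by measurable

lemma power_powr_inverse:
  fixes x :: real
  assumes "0 \<le> x" "1 \<le> p"
  shows "(x ^ p) powr (1 / real p) = x" and "(x powr (1 / real p)) ^ p = x"
proof -
  have "(x ^ p) powr (1 / real p) = (x powr real p) powr (1 / real p)"
    and "(x powr (1 / real p)) ^ p = (x powr (1 / real p)) powr real p"
    using assms by (simp_all add: powr_realpow')
  with assms show "(x ^ p) powr (1 / real p) = x" and "(x powr (1 / real p)) ^ p = x"
    by (simp_all add: powr_powr)
qed

lemma le_0_if_le_geometric:
  fixes x r K :: real
  assumes "0 \<le> r" "r < 1" and le: "\<And>p. 1 \<le> p \<Longrightarrow> x \<le> r ^ p * K"
  shows "x \<le> 0"
proof (rule LIMSEQ_le_const)
  show "(\<lambda>p. r ^ p * K) \<longlonglongrightarrow> 0"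
    using assms(1,2) by (intro tendsto_mult_left_zero LIMSEQ_power_zero) simp
  show "\<exists>N. \<forall>p\<ge>N. x \<le> r ^ p * K"
    using le by blast
qed

context finite_measure_subalgebra
begin

definition nonneg_bounded :: "('a \<Rightarrow> real) \<Rightarrow> real \<Rightarrow> bool" where
  "nonneg_bounded S B \<longleftrightarrow> S \<in> borel_measurable M \<and> (AE w in M. 0 \<le> S w \<and> S w \<le> B)"

lemma integrable_power_nonneg_bounded:
  assumes "nonneg_bounded S B"
  shows "integrable M (\<lambda>w. S w ^ p)"
proof (rule integrable_const_bound)
  show "AE w in M. norm (S w ^ p) \<le> B ^ p"
    using assms unfolding nonneg_bounded_def by (auto elim!: AE_mp simp: power_mono)
  have [measurable]: "S \<in> borel_measurable M"
    using assms unfolding nonneg_bounded_def by blast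
  show "(\<lambda>w. S w ^ p) \<in> borel_measurable M"
    by measurable
qed

lemma real_cond_exp_power_nonneg:
  assumes "nonneg_bounded S B"
  shows "AE w in M. \<forall>p. 0 \<le> real_cond_exp M F (\<lambda>v. S v ^ p) w"
  unfolding AE_all_countable
proof
  fix p
  show "AE w in M. 0 \<le> real_cond_exp M F (\<lambda>v. S v ^ p) w"
    using assms unfolding nonneg_bounded_def by (intro real_cond_exp_pos) (auto elim!: AE_mp)
qed

lemma cond_esssup_mono:
  assumes S: "nonneg_bounded S B" and T: "nonneg_bounded T B" and le: "AE w in M. S w \<le> T w"
  shows "AE w in M. cond_esssup M F S w \<le> cond_esssup M F T w"
proof -
  have "AE w in M. \<forall>p. real_cond_exp M F (\<lambda>v. S v ^ p) w \<le> real_cond_exp M F (\<lambda>v. T v ^ p) w"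
    unfolding AE_all_countable
  proof
    fix p
    have "AE w in M. S w ^ p \<le> T w ^ p"
      using le S unfolding nonneg_bounded_def by (auto elim!: AE_mp simp: power_mono)
    then show "AE w in M. real_cond_exp M F (\<lambda>v. S v ^ p) w \<le> real_cond_exp M F (\<lambda>v. T v ^ p) w"
      using integrable_power_nonneg_bounded[OF S] integrable_power_nonneg_bounded[OF T]
      by (rule real_cond_exp_mono)
  qed
  with real_cond_exp_power_nonneg[OF S] show ?thesis
    unfolding cond_esssup_def by eventually_elim (intro SUP_mono', simp add: powr_mono2)
qed

lemma cond_esssup_measurable_eq:
  assumes U: "U \<in> borel_measurable F" "AE w in M. 0 \<le> U w \<and> U w \<le> B"
  shows "AE w in M. cond_esssup M F U w = ereal (U w)"
proof -
  have "nonneg_bounded U B"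
    using U measurable_from_subalg[OF subalg] unfolding nonneg_bounded_def by blast
  then have "AE w in M. \<forall>p. real_cond_exp M F (\<lambda>v. U v ^ p) w = U w ^ p"
    unfolding AE_all_countable using U(1) by (auto intro!: integrable_power_nonneg_bounded)
  with U(2) show ?thesis
    unfolding cond_esssup_def by eventually_elim (simp add: power_powr_inverse)
qed

lemma cond_esssup_le_measurable:
  assumes S: "nonneg_bounded S B" and U: "U \<in> borel_measurable F" "AE w in M. 0 \<le> U w \<and> U w \<le> B"
    and le: "AE w in M. S w \<le> U w"
  shows "AE w in M. cond_esssup M F S w \<le> ereal (U w)"
proof -
  have "nonneg_bounded U B"
    using U measurable_from_subalg[OF subalg] unfolding nonneg_bounded_def by blast
  with S le have "AE w in M. cond_esssup M F S w \<le> cond_esssup M F U w"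
    by (intro cond_esssup_mono)
  with cond_esssup_measurable_eq[OF U] show ?thesis
    by eventually_elim simp
qed

lemma cond_esssup_le_bound:
  assumes S: "nonneg_bounded S B"
  shows "AE w in M. cond_esssup M F S w \<le> ereal B"
proof -
  have "AE w in M. 0 \<le> B"
    using S unfolding nonneg_bounded_def by (auto elim!: AE_mp)
  then show ?thesis
    using S unfolding nonneg_bounded_def by (intro cond_esssup_le_measurable[OF S]) auto
qed

lemma real_cond_exp_power_le_if_cond_esssup_le:
  assumes S: "nonneg_bounded S B" and p: "1 \<le> p"
  shows "AE w in M. \<forall>q. cond_esssup M F S w \<le> ereal q \<longrightarrow> real_cond_exp M F (\<lambda>v. S v ^ p) w \<le> q ^ p"
  using real_cond_exp_power_nonneg[OF S]
proof eventually_elim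
  case (elim w)
  let ?E = "real_cond_exp M F (\<lambda>v. S v ^ p) w"
  show ?case
  proof (intro allI impI)
    fix q
    have "ereal (?E powr (1 / real p)) \<le> cond_esssup M F S w"
      unfolding cond_esssup_def by (rule SUP_upper) (use p in simp)
    also assume "cond_esssup M F S w \<le> ereal q"
    finally have "(?E powr (1 / real p)) ^ p \<le> q ^ p"
      by (intro power_mono) simp_all
    then show "?E \<le> q ^ p"
      using power_powr_inverse(2)[OF elim[rule_format] p] by simp
  qed
qed

lemma integral_power_le_on_cond_esssup_le:
  fixes q :: real
  assumes S: "nonneg_bounded S B" and p: "1 \<le> p"
  defines "A \<equiv> {w \<in> space M. cond_esssup M F S w \<le> ereal q}"
  shows "(\<integral>w. indicator A w * S w ^ p \<partial>M) \<le> q ^ p * measure M A"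
proof -
  have [measurable]: "S \<in> borel_measurable M"
    using S unfolding nonneg_bounded_def by blast
  have "space F = space M"
    using subalg by (simp add: subalgebra_def)
  moreover have "{w \<in> space F. cond_esssup M F S w \<le> ereal q} \<in> sets F"
    by measurable
  ultimately have AF: "A \<in> sets F"
    unfolding A_def by simp
  then have AM: "A \<in> sets M"
    using subalg by (auto simp: subalgebra_def)
  have int: "integrable M (\<lambda>w. indicator A w * S w ^ p)"
    using integrable_real_mult_indicator[OF AM integrable_power_nonneg_bounded[OF S]] by (simp add: mult.commute)
  have "(\<integral>w. indicator A w * S w ^ p \<partial>M) = (\<integral>w. indicator A w * real_cond_exp M F (\<lambda>v. S v ^ p) w \<partial>M)"
    using int AF by (intro real_cond_exp_intg(2)[symmetric]) auto
  also have "\<dots> \<le> (\<integral>w. indicator A w * q ^ p \<partial>M)"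
  proof (rule integral_mono_AE)
    show "integrable M (\<lambda>w. indicator A w * real_cond_exp M F (\<lambda>v. S v ^ p) w)"
      using int AF by (intro real_cond_exp_intg(1)) auto
    show "integrable M (\<lambda>w. indicator A w * q ^ p)"
      using AM by (intro integrable_mult_left integrable_real_indicator) (simp_all add: less_top[symmetric])
    show "AE w in M. indicator A w * real_cond_exp M F (\<lambda>v. S v ^ p) w \<le> indicator A w * q ^ p"
      using real_cond_exp_power_le_if_cond_esssup_le[OF S p] by eventually_elim (simp add: A_def indicator_def)
  qed
  also have "\<dots> = q ^ p * measure M A"
    using AM by simp
  finally show ?thesis .
qed

lemma measure_cond_esssup_gap_le:
  assumes S: "nonneg_bounded S B" and q: "0 \<le> q" and d: "0 < d" and p: "1 \<le> p"
  shows "(q + d) ^ p * measure M {w \<in> space M. cond_esssup M F S w \<le> ereal q \<and> q + d \<le> S w}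
    \<le> q ^ p * measure M (space M)"
    (is "_ * measure M ?E \<le> _")
proof -
  have [measurable]: "S \<in> borel_measurable M"
    using S unfolding nonneg_bounded_def by blast
  have [measurable]: "cond_esssup M F S \<in> borel_measurable M"
    using measurable_from_subalg[OF subalg borel_measurable_cond_esssup] .
  let ?A = "{w \<in> space M. cond_esssup M F S w \<le> ereal q}"
  have E: "?E \<in> sets M" and A: "?A \<in> sets M"
    by measurable
  have "(q + d) ^ p * measure M ?E = (\<integral>w. indicator ?E w * (q + d) ^ p \<partial>M)"
    using E by simp
  also have "\<dots> \<le> (\<integral>w. indicator ?A w * S w ^ p \<partial>M)"
  proof (rule integral_mono_AE)
    show "integrable M (\<lambda>w. indicator ?E w * (q + d) ^ p)"
      using E by (intro integrable_mult_left integrable_real_indicator) (simp_all add: less_top[symmetric])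
    show "integrable M (\<lambda>w. indicator ?A w * S w ^ p)"
      using integrable_real_mult_indicator[OF A integrable_power_nonneg_bounded[OF S]]
      by (simp add: mult.commute)
    have "AE w in M. 0 \<le> S w"
      using S unfolding nonneg_bounded_def by (auto elim!: AE_mp)
    then show "AE w in M. indicator ?E w * (q + d) ^ p \<le> indicator ?A w * S w ^ p"
    proof eventually_elim
      case (elim w)
      have "(q + d) ^ p \<le> S w ^ p" if "q + d \<le> S w"
        using that q d by (intro power_mono) auto
      with elim show ?case
        by (auto simp: indicator_def)
    qed
  qed
  also have "\<dots> \<le> q ^ p * measure M ?A"
    by (rule integral_power_le_on_cond_esssup_le[OF S p])
  also have "\<dots> \<le> q ^ p * measure M (space M)"
    using A q by (intro mult_left_mono bounded_measure) auto
  finally show ?thesis .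
qed

lemma null_sets_cond_esssup_gap:
  assumes S: "nonneg_bounded S B" and d: "0 < d"
  shows "{w \<in> space M. cond_esssup M F S w \<le> ereal q \<and> q + d \<le> S w} \<in> null_sets M"
    (is "?E \<in> null_sets M")
proof (cases "q < 0")
  case True
  have "ereal q < cond_esssup M F S w" for w
    by (rule less_le_trans[OF _ cond_esssup_nonneg]) (simp add: True)
  then have "?E = {}"
    by (auto simp: not_le[symmetric])
  then show ?thesis
    by (simp only: null_sets.empty_sets)
next
  case False
  then have q: "0 \<le> q"
    by simp
  have "measure M ?E \<le> (q / (q + d)) ^ p * measure M (space M)" if "1 \<le> p" for p
    using measure_cond_esssup_gap_le[OF S q d that] q d by (simp add: power_divide field_simps)
  then have "measure M ?E \<le> 0"
    using q d by (intro le_0_if_le_geometric[of "q / (q + d)"]) auto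
  moreover have "?E \<in> sets M"
  proof -
    have [measurable]: "S \<in> borel_measurable M" "cond_esssup M F S \<in> borel_measurable M"
      using S measurable_from_subalg[OF subalg borel_measurable_cond_esssup]
      unfolding nonneg_bounded_def by blast+
    show ?thesis
      by measurable
  qed
  ultimately show ?thesis
    by (simp add: null_sets_def emeasure_eq_measure measure_le_0_iff)
qed

lemma cond_esssup_ge:
  assumes S: "nonneg_bounded S B"
  shows "AE w in M. ereal (S w) \<le> cond_esssup M F S w"
proof -
  have "AE w in M. \<forall>q\<in>\<rat>. \<forall>m::nat. \<not> (cond_esssup M F S w \<le> ereal q \<and> q + 1 / Suc m \<le> S w)"
    unfolding AE_ball_countable[OF countable_rat] AE_all_countable
  proof (intro ballI allI)
    fix q :: real and m :: nat
    show "AE w in M. \<not> (cond_esssup M F S w \<le> ereal q \<and> q + 1 / Suc m \<le> S w)"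
      by (rule AE_I'[OF null_sets_cond_esssup_gap[OF S, of "1 / Suc m" q]]) auto
  qed
  then show ?thesis
  proof eventually_elim
    case (elim w)
    show ?case
    proof (rule ccontr)
      assume "\<not> ereal (S w) \<le> cond_esssup M F S w"
      moreover have "0 \<le> cond_esssup M F S w"
        by (rule cond_esssup_nonneg)
      ultimately obtain v where v: "cond_esssup M F S w = ereal v" "v < S w"
        by (cases "cond_esssup M F S w") auto
      then obtain q where q: "q \<in> \<rat>" "v < q" "q < S w"
        using Rats_dense_in_real by blast
      then obtain m where "1 / real (Suc m) < S w - q"
        by (metis diff_gt_0_iff_gt nat_approx_posE of_nat_Suc)
      then have "q + 1 / Suc m \<le> S w"
        by simp
      moreover have "cond_esssup M F S w \<le> ereal q"
        using v q by simp
      ultimately show False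
        using elim q(1) by blast
    qed
  qed
qed

end

section \<open>Directed families attain their essential infimum\<close>

lemma AE_le_if_integral_le_min:
  fixes f g :: "'a \<Rightarrow> real"
  assumes f: "integrable M f" and g: "integrable M g"
    and le: "integral\<^sup>L M f \<le> (\<integral>w. min (f w) (g w) \<partial>M)"
  shows "AE w in M. f w \<le> g w"
proof -
  have int_min: "integrable M (\<lambda>w. min (f w) (g w))"
    using f g by simp
  have "integral\<^sup>L M (\<lambda>w. f w - min (f w) (g w)) \<le> 0"
    using le f int_min by simp
  moreover have "0 \<le> integral\<^sup>L M (\<lambda>w. f w - min (f w) (g w))"
    by (intro integral_nonneg_AE) simp
  ultimately have "AE w in M. f w - min (f w) (g w) = 0"
    using f int_min by (subst integral_nonneg_eq_0_iff_AE[symmetric]) auto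
  then show ?thesis
    by eventually_elim simp
qed

lemma exists_decreasing_below_if_directed:
  fixes \<phi> :: "'z \<Rightarrow> 'a \<Rightarrow> real"
  assumes directed: "\<And>Z1 Z2. Z1 \<in> B \<Longrightarrow> Z2 \<in> B \<Longrightarrow> \<exists>Z\<in>B. AE w in M. \<phi> Z w \<le> min (\<phi> Z1 w) (\<phi> Z2 w)"
    and Zs: "\<And>n. Zs n \<in> B"
  shows "\<exists>W. (\<forall>n. W n \<in> B) \<and> (\<forall>n. AE w in M. \<phi> (W (Suc n)) w \<le> \<phi> (W n) w) \<and>
    (\<forall>n. AE w in M. \<phi> (W n) w \<le> \<phi> (Zs n) w)"
proof -
  define glue where "glue Z1 Z2 = (SOME Z. Z \<in> B \<and> (AE w in M. \<phi> Z w \<le> min (\<phi> Z1 w) (\<phi> Z2 w)))" for Z1 Z2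
  have glue: "glue Z1 Z2 \<in> B \<and> (AE w in M. \<phi> (glue Z1 Z2) w \<le> min (\<phi> Z1 w) (\<phi> Z2 w))"
    if "Z1 \<in> B" "Z2 \<in> B" for Z1 Z2
    unfolding glue_def by (rule someI_ex) (use directed[OF that] in blast)
  define W where "W = rec_nat (Zs 0) (\<lambda>n Wn. glue (Zs (Suc n)) Wn)"
  have W_Suc: "W (Suc n) = glue (Zs (Suc n)) (W n)" for n
    unfolding W_def by simp
  have W: "W n \<in> B" for n
    by (induction n) (simp_all add: W_def Zs glue)
  have W_le: "AE w in M. \<phi> (W n) w \<le> min (\<phi> (Zs n) w) (\<phi> (W (n - 1)) w)" for n
  proof (cases n)
    case 0
    then show ?thesis
      by (simp add: W_def)
  next
    case (Suc m)
    then show ?thesis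
      using glue[OF Zs W, of "Suc m" m] by (simp add: W_Suc)
  qed
  have "AE w in M. \<phi> (W (Suc n)) w \<le> \<phi> (W n) w" "AE w in M. \<phi> (W n) w \<le> \<phi> (Zs n) w" for n
    using W_le[of "Suc n"] W_le[of n] by (auto elim!: AE_mp)
  with W show ?thesis
    by blast
qed

lemma exists_ae_minimal_if_directed:
  fixes \<phi> :: "'z \<Rightarrow> 'a \<Rightarrow> real"
  assumes "B \<noteq> {}"
    and integrable: "\<And>Z. Z \<in> B \<Longrightarrow> integrable M (\<phi> Z)"
    and nonneg: "\<And>Z. Z \<in> B \<Longrightarrow> AE w in M. 0 \<le> \<phi> Z w"
    and directed: "\<And>Z1 Z2. Z1 \<in> B \<Longrightarrow> Z2 \<in> B \<Longrightarrow> \<exists>Z\<in>B. AE w in M. \<phi> Z w \<le> min (\<phi> Z1 w) (\<phi> Z2 w)"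
    and decreasing: "\<And>W. (\<And>n. W n \<in> B) \<Longrightarrow> (\<And>n. AE w in M. \<phi> (W (Suc n)) w \<le> \<phi> (W n) w) \<Longrightarrow>
      \<exists>Y\<in>B. \<forall>n. AE w in M. \<phi> Y w \<le> \<phi> (W n) w"
  shows "\<exists>Y\<in>B. \<forall>Z\<in>B. AE w in M. \<phi> Y w \<le> \<phi> Z w"
proof -
  define J where "J Z = integral\<^sup>L M (\<phi> Z)" for Z
  define \<beta> where "\<beta> = Inf (J ` B)"
  have "bdd_below (J ` B)"
    using nonneg unfolding J_def by (intro bdd_belowI[of _ 0]) (auto intro: integral_nonneg_AE)
  then have \<beta>_le: "\<beta> \<le> J Z" if "Z \<in> B" for Z
    unfolding \<beta>_def using that by (intro cInf_lower) auto
  have "\<exists>Z\<in>B. J Z < \<beta> + inverse (real (Suc n))" for n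
    using cInf_lessD[of "J ` B"] \<open>B \<noteq> {}\<close> unfolding \<beta>_def by simp
  then obtain Zs where Zs: "\<And>n. Zs n \<in> B" "\<And>n. J (Zs n) < \<beta> + inverse (real (Suc n))"
    by metis
  obtain W where W: "\<And>n. W n \<in> B" "\<And>n. AE w in M. \<phi> (W (Suc n)) w \<le> \<phi> (W n) w"
    and W_le: "\<And>n. AE w in M. \<phi> (W n) w \<le> \<phi> (Zs n) w"
    using exists_decreasing_below_if_directed[of B \<phi> M Zs, OF directed Zs(1)] by blast
  obtain Y where Y: "Y \<in> B" "\<And>n. AE w in M. \<phi> Y w \<le> \<phi> (W n) w"
    using decreasing[of W, OF W] by blast
  have "J Y \<le> \<beta>"
  proof (rule LIMSEQ_le_const[OF LIMSEQ_inverse_real_of_nat_add], intro exI allI impI)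
    fix n
    have "J Y \<le> J (Zs n)"
      unfolding J_def using W_le[of n] Y(2)[of n]
      by (intro integral_mono_AE integrable Y(1) Zs(1)) (auto elim!: AE_mp)
    with Zs(2)[of n] show "J Y \<le> \<beta> + inverse (real (Suc n))"
      by linarith
  qed
  have "AE w in M. \<phi> Y w \<le> \<phi> Z w" if Z: "Z \<in> B" for Z
  proof (rule AE_le_if_integral_le_min[OF integrable[OF Y(1)] integrable[OF Z]])
    obtain Z' where Z': "Z' \<in> B" "AE w in M. \<phi> Z' w \<le> min (\<phi> Y w) (\<phi> Z w)"
      using directed[OF Y(1) Z] by blast
    have "J Y \<le> J Z'"
      using \<open>J Y \<le> \<beta>\<close> \<beta>_le[OF Z'(1)] by linarith
    also have "\<dots> \<le> (\<integral>w. min (\<phi> Y w) (\<phi> Z w) \<partial>M)"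
      unfolding J_def using Z' integrable[OF Y(1)] integrable[OF Z] by (intro integral_mono_AE integrable) auto
    finally show "integral\<^sup>L M (\<phi> Y) \<le> (\<integral>w. min (\<phi> Y w) (\<phi> Z w) \<partial>M)"
      unfolding J_def .
  qed
  with Y(1) show ?thesis
    by blast
qed

section \<open>Best approximation by G-measurable variables\<close>

locale bounded_K_rv = local_field_abs a + finite_measure_subalgebra M G
  for a :: "'k::field \<Rightarrow> real" and M G :: "'w measure" +
  fixes X :: "'w \<Rightarrow> 'k" and C :: real
  assumes X_measurable: "X \<in> measurable M (kborel a)"
    and X_bound: "AE w in M. a (X w) \<le> C"
    and C_nonneg: "0 \<le> C"
begin

definition bounded_G :: "('w \<Rightarrow> 'k) set" where
  "bounded_G = {Z. Z \<in> measurable G (kborel a) \<and> (\<forall>w. a (Z w) \<le> C)}"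

(* real_of_ereal sends \<infinity> to 0; cond_norm_eq_cond_dist shows the norm is a.e. finite here. *)
definition cond_dist :: "('w \<Rightarrow> 'k) \<Rightarrow> 'w \<Rightarrow> real" where
  "cond_dist Z w = real_of_ereal (cond_norm M G a (\<lambda>v. X v - Z v) w)"

lemma nonneg_bounded_absv_diff:
  assumes Z: "Z \<in> measurable G (kborel a)" and bound: "AE w in M. a (Z w) \<le> K" and "C \<le> K"
  shows "nonneg_bounded (\<lambda>w. a (X w - Z w)) K"
  unfolding nonneg_bounded_def
proof
  show "(\<lambda>w. a (X w - Z w)) \<in> borel_measurable M"
    using X_measurable measurable_from_subalg[OF subalg Z] by (rule borel_measurable_absv_diff)
  show "AE w in M. 0 \<le> a (X w - Z w) \<and> a (X w - Z w) \<le> K"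
    using X_bound bound
  proof eventually_elim
    case (elim w)
    with \<open>C \<le> K\<close> have "max (a (X w)) (a (Z w)) \<le> K"
      by simp
    with absv_diff_le_max[of "X w" "Z w"] have "a (X w - Z w) \<le> K"
      by (rule order_trans)
    then show ?case
      by simp
  qed
qed

lemma nonneg_bounded_bounded_G:
  "Z \<in> bounded_G \<Longrightarrow> nonneg_bounded (\<lambda>w. a (X w - Z w)) C"
  unfolding bounded_G_def by (intro nonneg_bounded_absv_diff) auto

lemma cond_norm_eq_cond_dist:
  assumes "Z \<in> bounded_G"
  shows "AE w in M. cond_norm M G a (\<lambda>v. X v - Z v) w = ereal (cond_dist Z w) \<and>
    0 \<le> cond_dist Z w \<and> cond_dist Z w \<le> C"
  using cond_esssup_le_bound[OF nonneg_bounded_bounded_G[OF assms]]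
proof eventually_elim
  case (elim w)
  moreover have "0 \<le> cond_norm M G a (\<lambda>v. X v - Z v) w"
    unfolding cond_norm_def by (rule cond_esssup_nonneg)
  ultimately show ?case
    unfolding cond_dist_def cond_norm_def by (cases "cond_esssup M G (\<lambda>v. a (X v - Z v)) w") auto
qed

lemma borel_measurable_cond_dist [measurable]: "cond_dist Z \<in> borel_measurable G"
  unfolding cond_dist_def cond_norm_def by measurable

lemma absv_le_cond_dist:
  assumes "Z \<in> bounded_G"
  shows "AE w in M. a (X w - Z w) \<le> cond_dist Z w"
  using cond_esssup_ge[OF nonneg_bounded_bounded_G[OF assms]] cond_norm_eq_cond_dist[OF assms]
  by eventually_elim (simp add: cond_norm_def)

lemma cond_dist_le:
  assumes Z: "Z \<in> bounded_G" and U: "U \<in> borel_measurable G" "AE w in M. 0 \<le> U w \<and> U w \<le> C"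
    and le: "AE w in M. a (X w - Z w) \<le> U w"
  shows "AE w in M. cond_dist Z w \<le> U w"
  using cond_esssup_le_measurable[OF nonneg_bounded_bounded_G[OF Z] U le] cond_norm_eq_cond_dist[OF Z]
  by eventually_elim (simp add: cond_norm_def)

lemma cond_dist_directed:
  assumes Z1: "Z1 \<in> bounded_G" and Z2: "Z2 \<in> bounded_G"
  shows "\<exists>Z\<in>bounded_G. AE w in M. cond_dist Z w \<le> min (cond_dist Z1 w) (cond_dist Z2 w)"
proof
  define Z where "Z w = (if cond_dist Z1 w < cond_dist Z2 w then Z1 w else Z2 w)" for w
  have "{w \<in> space G. cond_dist Z1 w < cond_dist Z2 w} \<in> sets G"
    by measurable
  then have "Z \<in> measurable G (kborel a)"
    unfolding Z_def using Z1 Z2 by (intro measurable_If) (auto simp: bounded_G_def)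
  then show Z: "Z \<in> bounded_G"
    using Z1 Z2 unfolding bounded_G_def Z_def by auto
  show "AE w in M. cond_dist Z w \<le> min (cond_dist Z1 w) (cond_dist Z2 w)"
  proof (rule cond_dist_le[OF Z])
    show "AE w in M. 0 \<le> min (cond_dist Z1 w) (cond_dist Z2 w) \<and> min (cond_dist Z1 w) (cond_dist Z2 w) \<le> C"
      using cond_norm_eq_cond_dist[OF Z1] cond_norm_eq_cond_dist[OF Z2] by eventually_elim auto
    show "AE w in M. a (X w - Z w) \<le> min (cond_dist Z1 w) (cond_dist Z2 w)"
      using absv_le_cond_dist[OF Z1] absv_le_cond_dist[OF Z2] by eventually_elim (auto simp: Z_def)
  qed measurable
qed

lemma cond_dist_decreasing_bound:
  assumes W: "\<And>n. W n \<in> bounded_G"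
    and decreasing: "\<And>n. AE w in M. cond_dist (W (Suc n)) w \<le> cond_dist (W n) w"
  shows "\<exists>Y\<in>bounded_G. \<forall>n. AE w in M. cond_dist Y w \<le> cond_dist (W n) w"
proof -
  obtain Y where "Y \<in> measurable G (kborel a)" "\<forall>w. a (Y w) \<le> C"
    and cluster: "\<forall>w e j. 0 < e \<longrightarrow> (\<exists>m\<ge>j. a (W m w - Y w) < e)"
    using exists_measurable_cluster_point[of W G C] W unfolding bounded_G_def by blast
  then have Y: "Y \<in> bounded_G"
    unfolding bounded_G_def by blast
  have "AE w in M. cond_dist Y w \<le> cond_dist (W n) w" for n
  proof (rule cond_dist_le[OF Y])
    show "AE w in M. 0 \<le> cond_dist (W n) w \<and> cond_dist (W n) w \<le> C"
      using cond_norm_eq_cond_dist[OF W] by (auto elim!: AE_mp)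
    have "AE w in M. \<forall>m. a (X w - W m w) \<le> cond_dist (W m) w"
      unfolding AE_all_countable using absv_le_cond_dist[OF W] by blast
    moreover have "AE w in M. \<forall>m. cond_dist (W (Suc m)) w \<le> cond_dist (W m) w"
      unfolding AE_all_countable using decreasing by blast
    moreover have "AE w in M. 0 \<le> cond_dist (W n) w"
      using cond_norm_eq_cond_dist[OF W] by (auto elim!: AE_mp)
    ultimately show "AE w in M. a (X w - Y w) \<le> cond_dist (W n) w"
    proof eventually_elim
      case (elim w)
      have mono: "cond_dist (W m) w \<le> cond_dist (W n) w" if "n \<le> m" for m
        using that by (induction m rule: dec_induct) (use elim(2) order_trans in blast)+
      show ?case
      proof (rule field_le_epsilon)
        fix e :: real
        assume "0 < e"
        then obtain m where m: "n \<le> m" "a (W m w - Y w) < e"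
          using cluster by blast
        have "a (X w - Y w) \<le> max (a (X w - W m w)) (a (W m w - Y w))"
          by (rule absv_diff_triangle)
        also have "\<dots> \<le> cond_dist (W n) w + e"
          using elim(1)[rule_format, of m] mono[OF m(1)] m(2) elim(3) \<open>0 < e\<close> by auto
        finally show "a (X w - Y w) \<le> cond_dist (W n) w + e" .
      qed
    qed
  qed measurable
  with Y show ?thesis
    by blast
qed

lemma exists_cond_dist_minimizer: "\<exists>Y\<in>bounded_G. \<forall>Z\<in>bounded_G. AE w in M. cond_dist Y w \<le> cond_dist Z w"
proof (rule exists_ae_minimal_if_directed)
  show "bounded_G \<noteq> {}"
    using C_nonneg unfolding bounded_G_def by (auto intro!: exI[of _ "\<lambda>_. 0"])
  show "integrable M (cond_dist Z)" if "Z \<in> bounded_G" for Z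
  proof (rule integrable_const_bound)
    show "AE w in M. norm (cond_dist Z w) \<le> C"
      using cond_norm_eq_cond_dist[OF that] by (auto elim!: AE_mp)
  qed (rule measurable_from_subalg[OF subalg borel_measurable_cond_dist])
  show "AE w in M. 0 \<le> cond_dist Z w" if "Z \<in> bounded_G" for Z
    using cond_norm_eq_cond_dist[OF that] by (auto elim!: AE_mp)
qed (fact cond_dist_directed cond_dist_decreasing_bound)+

lemma truncation_improves_cond_norm:
  assumes "LinfG M G a Z"
  shows "\<exists>Z'\<in>bounded_G. AE w in M.
    cond_norm M G a (\<lambda>v. X v - Z' v) w \<le> cond_norm M G a (\<lambda>v. X v - Z v) w"
proof
  obtain K where Z: "Z \<in> measurable G (kborel a)" and bound: "AE w in M. a (Z w) \<le> K"
    using assms unfolding LinfG_def by blast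
  define Z' where "Z' w = (if a (Z w) \<le> C then Z w else 0)" for w
  have "{w \<in> space G. a (Z w) \<le> C} \<in> sets G"
    using borel_measurable_absv[OF Z] by measurable
  then have "Z' \<in> measurable G (kborel a)"
    unfolding Z'_def using Z by (intro measurable_If) auto
  then show Z': "Z' \<in> bounded_G"
    unfolding bounded_G_def Z'_def using C_nonneg by auto
  \<comment> \<open>where |Z| > C >= |X|, the ultrametric inequality gives |X - Z| >= |Z| > |X| = |X - Z'|\<close>
  have "AE w in M. a (X w - Z' w) \<le> a (X w - Z w)"
    using X_bound
  proof eventually_elim
    case (elim w)
    then show ?case
      using absv_le_diff_if_less[of "X w" "Z w"] by (auto simp: Z'_def)
  qed
  moreover have "nonneg_bounded (\<lambda>w. a (X w - Z' w)) (max C K)"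
    using Z' unfolding bounded_G_def by (intro nonneg_bounded_absv_diff) (auto simp: max.coboundedI1)
  moreover have "nonneg_bounded (\<lambda>w. a (X w - Z w)) (max C K)"
    using Z bound by (intro nonneg_bounded_absv_diff) (auto elim!: AE_mp)
  ultimately show "AE w in M. cond_norm M G a (\<lambda>v. X v - Z' v) w \<le> cond_norm M G a (\<lambda>v. X v - Z v) w"
    unfolding cond_norm_def by (intro cond_esssup_mono)
qed

lemma cond_exp_K_nonempty: "cond_exp_K M G a X \<noteq> {}"
proof -
  obtain Y where Y: "Y \<in> bounded_G" and min: "\<And>Z. Z \<in> bounded_G \<Longrightarrow> AE w in M. cond_dist Y w \<le> cond_dist Z w"
    using exists_cond_dist_minimizer by blast
  have "Y \<in> cond_exp_K M G a X"
    unfolding cond_exp_K_def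
  proof (intro CollectI conjI allI impI)
    show "LinfG M G a Y"
      using Y unfolding bounded_G_def LinfG_def by blast
    fix Z
    assume "LinfG M G a Z"
    then obtain Z' where Z': "Z' \<in> bounded_G"
      and le: "AE w in M. cond_norm M G a (\<lambda>v. X v - Z' v) w \<le> cond_norm M G a (\<lambda>v. X v - Z v) w"
      using truncation_improves_cond_norm by blast
    show "AE w in M. cond_norm M G a (\<lambda>v. X v - Y v) w \<le> cond_norm M G a (\<lambda>v. X v - Z v) w"
      using le min[OF Z'] cond_norm_eq_cond_dist[OF Y] cond_norm_eq_cond_dist[OF Z']
    proof eventually_elim
      case (elim w)
      then have "cond_norm M G a (\<lambda>v. X v - Y v) w \<le> cond_norm M G a (\<lambda>v. X v - Z' v) w"
        by simp
      also note elim(1)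
      finally show ?case .
    qed
  qed
  then show ?thesis
    by blast
qed

end

theorem mainTheorem9:
  fixes M G :: "'w measure" and a :: "'k::field \<Rightarrow> real" and X :: "'w \<Rightarrow> 'k"
  assumes "prob_space M" and "local_field a" and "subalgebra M G" and "Linf M a X"
  shows "cond_exp_K M G a X \<noteq> {}"
proof -
  obtain C where X: "X \<in> measurable M (kborel a)" and bound: "AE w in M. a (X w) \<le> C"
    using \<open>Linf M a X\<close> unfolding Linf_def by blast
  interpret bounded_K_rv a M G X "max C 0"
  proof (intro bounded_K_rv.intro local_field_abs.intro finite_measure_subalgebra.intro bounded_K_rv_axioms.intro)
    show "finite_measure_subalgebra_axioms M G"
      using \<open>subalgebra M G\<close> by (rule finite_measure_subalgebra_axioms.intro)
    show "AE w in M. a (X w) \<le> max C 0"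
      using bound by (auto elim!: AE_mp)
  qed (use assms X prob_space.finite_measure in auto)
  show ?thesis
    by (rule cond_exp_K_nonempty)
qed

end
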